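(* Let $G=(V,E)$ be an event graph. Then $\mathrm{dec}(G)$ has exactly one sink component; in particular, the sink component $\mathcal C$ that is the only sink component reachable from every node $(v,\emptyset)$, $v\in V$, is the only sink component of $\mathrm{dec}(G)$, and it is reachable from every node of $\mathrm{dec}(G)$.
   Context: An event graph is a finite, connected, undirected graph $G=(V,E)$, with $n=|V|$, in which every node $v$ carries a label that is either $\mathtt{i}x_v$ (insertion of $x_v$) or $\mathtt{d}x_v$ (deletion of $x_v$), where $x_v$ is an element of a finite universe $\mathcal U$. Write $\mathcal U_{|V}=\{x_v : v\in V\}$. It is assumed that for each $x\in\mathcal U_{|V}$ at least one node is labeled $\mathtt{i}x$ and at least one node is labeled $\mathtt{d}x$. The decorated graph $\mathrm{dec}(G)$ is the directed graph with vertex set $V\times 2^{\mathcal U_{|V}}$ in which $((u,X),(v,Y))$ is an edge if and only if $\{u,v\}\in E$ and $Y=X\cup\{x_v\}$ when $v$ is labeled $\mathtt{i}x_v$, respectively $Y=X\setminus\{x_v\}$ when $v$ is labeled $\mathtt{d}x_v$. A sink component of $\mathrm{dec}(G)$ is a strongly connected component of $\mathrm{dec}(G)$ from which no edge leads to a different strongly connected component. *)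

theory Defs
  imports Main
begin

text \<open>An event graph: vertex set V, undirected edges E (2-element subsets of V),
  each node v labelled insertion (ins v = True) or deletion (ins v = False) of x v,
  an element of the finite universe U.\<close>

definition graph_rel :: "'v set set \<Rightarrow> ('v \<times> 'v) set" where
  "graph_rel E = {(a, b). {a, b} \<in> E}"

definition event_graph ::
  "'v set \<Rightarrow> 'v set set \<Rightarrow> ('v \<Rightarrow> bool) \<Rightarrow> ('v \<Rightarrow> 'u) \<Rightarrow> 'u set \<Rightarrow> bool" where
  "event_graph V E ins x U \<longleftrightarrow>
     finite V \<and> V \<noteq> {} \<and> finite U \<and>
     (\<forall>e\<in>E. e \<subseteq> V \<and> card e = 2) \<and>
     (\<forall>u\<in>V. \<forall>v\<in>V. (u, v) \<in> (graph_rel E)\<^sup>*) \<and>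
     x ` V \<subseteq> U \<and>
     (\<forall>a\<in>x ` V. (\<exists>v\<in>V. ins v \<and> x v = a) \<and> (\<exists>v\<in>V. \<not> ins v \<and> x v = a))"

definition dec_nodes :: "'v set \<Rightarrow> ('v \<Rightarrow> 'u) \<Rightarrow> ('v \<times> 'u set) set" where
  "dec_nodes V x = V \<times> Pow (x ` V)"

definition upd :: "('v \<Rightarrow> bool) \<Rightarrow> ('v \<Rightarrow> 'u) \<Rightarrow> 'v \<Rightarrow> 'u set \<Rightarrow> 'u set" where
  "upd ins x v X = (if ins v then insert (x v) X else X - {x v})"

definition dec_edges ::
  "'v set \<Rightarrow> 'v set set \<Rightarrow> ('v \<Rightarrow> bool) \<Rightarrow> ('v \<Rightarrow> 'u) \<Rightarrow> (('v \<times> 'u set) \<times> ('v \<times> 'u set)) set" where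
  "dec_edges V E ins x =
     {((u, X), (v, Y)). (u, X) \<in> dec_nodes V x \<and> (v, Y) \<in> dec_nodes V x \<and>
        {u, v} \<in> E \<and> Y = upd ins x v X}"

definition scc :: "'a set \<Rightarrow> ('a \<times> 'a) set \<Rightarrow> 'a set \<Rightarrow> bool" where
  "scc N R C \<longleftrightarrow> (\<exists>a\<in>N. C = {b\<in>N. (a, b) \<in> R\<^sup>* \<and> (b, a) \<in> R\<^sup>*})"

definition sink_component :: "'a set \<Rightarrow> ('a \<times> 'a) set \<Rightarrow> 'a set \<Rightarrow> bool" where
  "sink_component N R C \<longleftrightarrow> scc N R C \<and> (\<forall>a\<in>C. \<forall>b. (a, b) \<in> R \<longrightarrow> b \<in> C)"

end

theory Submission
  imports Defs
begin

(* A digraph in which one node c0 is reachable from every node has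
   exactly one sink component, namely the strongly connected component of c0, and it is
   reachable from everywhere.  So it suffices to exhibit such a node in dec(G).

   Fix a vertex r of G.  A walk in G starting at a vertex u lifts to a path in dec(G) from
   (u, X), for every X: the set component simply executes the labels along the walk.  The
   final set after executing a walk ws forgets X on every element x_w with w on ws, since
   the last occurrence of such an element decides its membership.  Because each element
   carries an insertion and a deletion node, it is the label of some vertex other than r;
   connectivity gives a closed walk W at r through all vertices other than r, which thus
   touches every element of U_{|V}.  Executing W "resets" every set to the same S, so
   (r, S) is reachable from every node: walk from u to r, then run W. *)

lemma sink_component_reach_closed:
  assumes "sink_component N R C" and "a \<in> C" and "(a, b) \<in> R\<^sup>*"
  shows "b \<in> C"
  using assms(3,2) assms(1) unfolding sink_component_def
  by (induction rule: rtrancl_induct) blast+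

lemma sink_component_of_universal_target:
  assumes "R \<subseteq> N \<times> N" and "c0 \<in> N" and "\<forall>w\<in>N. (w, c0) \<in> R\<^sup>*"
  shows "sink_component N R {b\<in>N. (c0, b) \<in> R\<^sup>* \<and> (b, c0) \<in> R\<^sup>*}"
  unfolding sink_component_def scc_def
proof (intro conjI ballI allI impI)
  fix a b
  assume a: "a \<in> {b\<in>N. (c0, b) \<in> R\<^sup>* \<and> (b, c0) \<in> R\<^sup>*}" and ab: "(a, b) \<in> R"
  then have "b \<in> N" and "(c0, b) \<in> R\<^sup>*" using assms(1) by auto
  then show "b \<in> {b\<in>N. (c0, b) \<in> R\<^sup>* \<and> (b, c0) \<in> R\<^sup>*}" using assms(3) by blast
qed (use assms(2) in blast)

(* Every sink component contains any node reachable from everywhere, hence it is the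
   component of that node. *)
lemma sink_component_unique:
  assumes "sink_component N R C" and "\<forall>w\<in>N. (w, c0) \<in> R\<^sup>*"
  shows "C = {b\<in>N. (c0, b) \<in> R\<^sup>* \<and> (b, c0) \<in> R\<^sup>*}"
proof -
  obtain a where aN: "a \<in> N" and C: "C = {b\<in>N. (a, b) \<in> R\<^sup>* \<and> (b, a) \<in> R\<^sup>*}"
    using assms(1) unfolding sink_component_def scc_def by blast
  have "a \<in> C" using aN C by blast
  then have "c0 \<in> C" using sink_component_reach_closed[OF assms(1)] assms(2) aN by blast
  then have "(a, c0) \<in> R\<^sup>*" "(c0, a) \<in> R\<^sup>*" using C by auto
  then show ?thesis unfolding C by (blast intro: rtrancl_trans)
qed

lemma unique_sink_component:
  assumes "R \<subseteq> N \<times> N" and "c0 \<in> N" and "\<forall>w\<in>N. (w, c0) \<in> R\<^sup>*"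
  shows "\<exists>C. sink_component N R C \<and> (\<forall>C'. sink_component N R C' \<longrightarrow> C' = C)
           \<and> (\<forall>w\<in>N. \<exists>c\<in>C. (w, c) \<in> R\<^sup>*)"
proof (intro exI conjI allI impI ballI)
  let ?C = "{b\<in>N. (c0, b) \<in> R\<^sup>* \<and> (b, c0) \<in> R\<^sup>*}"
  show "sink_component N R ?C" using sink_component_of_universal_target[OF assms] .
  show "C' = ?C" if "sink_component N R C'" for C' using sink_component_unique[OF that assms(3)] .
  show "\<exists>c\<in>?C. (w, c) \<in> R\<^sup>*" if "w \<in> N" for w using that assms(2,3) by blast
qed

fun walk :: "'v set set \<Rightarrow> 'v \<Rightarrow> 'v list \<Rightarrow> bool" where
  "walk E u [] = True"
| "walk E u (w # ws) = ({u, w} \<in> E \<and> walk E w ws)"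

fun run :: "('v \<Rightarrow> bool) \<Rightarrow> ('v \<Rightarrow> 'u) \<Rightarrow> 'u set \<Rightarrow> 'v list \<Rightarrow> 'u set" where
  "run ins x X [] = X"
| "run ins x X (w # ws) = run ins x (upd ins x w X) ws"

lemma walk_append: "walk E u (ws @ vs) \<longleftrightarrow> walk E u ws \<and> walk E (last (u # ws)) vs"
  by (induction ws arbitrary: u) auto

lemma walk_vertices: "\<forall>e\<in>E. e \<subseteq> V \<Longrightarrow> walk E u ws \<Longrightarrow> set ws \<subseteq> V"
  by (induction ws arbitrary: u) auto

lemma walk_of_reach:
  assumes "(u, v) \<in> (graph_rel E)\<^sup>*"
  shows "\<exists>ws. walk E u ws \<and> last (u # ws) = v"
  using assms
proof (induction rule: rtrancl_induct)
  case base
  show ?case by (intro exI[of _ "[]"]) simp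
next
  case (step y z)
  then obtain ws where "walk E u ws" "last (u # ws) = y" by blast
  with step(2) show ?case
    by (intro exI[of _ "ws @ [z]"]) (simp add: walk_append graph_rel_def)
qed

lemma run_untouched: "a \<notin> x ` set ws \<Longrightarrow> a \<in> run ins x X ws \<longleftrightarrow> a \<in> X"
  by (induction ws arbitrary: X) (auto simp: upd_def)

(* Membership of a touched element depends only on its last occurrence, not on X. *)
lemma run_touched: "a \<in> x ` set ws \<Longrightarrow> a \<in> run ins x X ws \<longleftrightarrow> a \<in> run ins x Y ws"
proof (induction ws arbitrary: X Y)
  case (Cons w ws)
  show ?case
  proof (cases "a \<in> x ` set ws")
    case False
    then have "a = x w" using Cons.prems by simp
    with False show ?thesis by (simp add: run_untouched upd_def)
  qed (simp add: Cons.IH)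
qed simp

lemma run_subset: "set ws \<subseteq> V \<Longrightarrow> X \<subseteq> x ` V \<Longrightarrow> run ins x X ws \<subseteq> x ` V"
proof (induction ws arbitrary: X)
  case (Cons w ws)
  then have "upd ins x w X \<subseteq> x ` V" by (auto simp: upd_def)
  with Cons show ?case by simp
qed simp

lemma run_reset:
  assumes "set W \<subseteq> V" and "x ` V \<subseteq> x ` set W" and "X \<subseteq> x ` V" and "Y \<subseteq> x ` V"
  shows "run ins x X W = run ins x Y W"
proof (rule set_eqI)
  fix a
  show "a \<in> run ins x X W \<longleftrightarrow> a \<in> run ins x Y W"
  proof (cases "a \<in> x ` V")
    case True
    then have "a \<in> x ` set W" using assms(2) by blast
    then show ?thesis by (rule run_touched)
  next
    case False
    with run_subset[OF assms(1,3)] run_subset[OF assms(1,4)] show ?thesis by blast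
  qed
qed

lemma dec_path_of_walk:
  assumes EV: "\<forall>e\<in>E. e \<subseteq> V"
  shows "walk E u ws \<Longrightarrow> u \<in> V \<Longrightarrow> X \<subseteq> x ` V \<Longrightarrow>
    ((u, X), (last (u # ws), run ins x X ws)) \<in> (dec_edges V E ins x)\<^sup>*"
proof (induction ws arbitrary: u X)
  case (Cons w ws)
  have uw: "{u, w} \<in> E" and rest: "walk E w ws" using Cons.prems by auto
  have wV: "w \<in> V" using uw EV by blast
  have X': "upd ins x w X \<subseteq> x ` V" using Cons.prems wV by (auto simp: upd_def)
  have "((u, X), (w, upd ins x w X)) \<in> dec_edges V E ins x"
    using uw Cons.prems wV X' by (simp add: dec_edges_def dec_nodes_def)
  moreover have "((w, upd ins x w X), (last (w # ws), run ins x (upd ins x w X) ws))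
      \<in> (dec_edges V E ins x)\<^sup>*"
    using Cons.IH rest wV X' by blast
  ultimately show ?case by simp
qed simp

lemma closed_walk_covering:
  assumes conn: "\<forall>u\<in>V. \<forall>v\<in>V. (u, v) \<in> (graph_rel E)\<^sup>*" and r: "r \<in> V"
    and "finite T" and "T \<subseteq> V - {r}"
  shows "\<exists>ws. walk E r ws \<and> last (r # ws) = r \<and> T \<subseteq> set ws"
  using assms(3,4)
proof (induction T rule: finite_induct)
  case empty
  show ?case by (intro exI[of _ "[]"]) simp
next
  case (insert t T)
  then obtain ws where ws: "walk E r ws" "last (r # ws) = r" "T \<subseteq> set ws" by auto
  have t: "t \<in> V" "t \<noteq> r" using insert.prems by auto
  obtain ws1 where ws1: "walk E r ws1" "last (r # ws1) = t"
    using walk_of_reach conn r t(1) by meson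
  obtain ws2 where ws2: "walk E t ws2" "last (t # ws2) = r"
    using walk_of_reach conn r t(1) by meson
  have "t \<in> set ws1" using ws1(2) t(2) by (metis last.simps last_in_set)
  moreover have "ws2 \<noteq> []" using ws2(2) t(2) by auto
  ultimately show ?case using ws ws1 ws2
    by (intro exI[of _ "ws @ ws1 @ ws2"]) (auto simp: walk_append)
qed

(* Each element has an insertion and a deletion node, so some node other than r carries it. *)
lemma label_avoids_vertex:
  assumes "event_graph V E ins x U" and "a \<in> x ` V"
  shows "\<exists>t\<in>V - {r}. x t = a"
proof -
  have "\<forall>a\<in>x ` V. (\<exists>v\<in>V. ins v \<and> x v = a) \<and> (\<exists>v\<in>V. \<not> ins v \<and> x v = a)"
    using assms(1) unfolding event_graph_def by (elim conjE)
  then obtain v1 v2 where v: "v1 \<in> V" "v2 \<in> V" "ins v1" "\<not> ins v2" "x v1 = a" "x v2 = a"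
    using assms(2) by blast
  show ?thesis
  proof (cases "v1 = r")
    case True
    then have "v2 \<noteq> r" using v(3,4) by blast
    then show ?thesis using v(2,6) by blast
  qed (use v(1,5) in blast)
qed

lemma synchronizing_walk:
  assumes G: "event_graph V E ins x U" and r: "r \<in> V"
  shows "\<exists>W. walk E r W \<and> last (r # W) = r \<and> x ` V \<subseteq> x ` set W"
proof -
  have "finite V" and "\<forall>u\<in>V. \<forall>v\<in>V. (u, v) \<in> (graph_rel E)\<^sup>*"
    using G unfolding event_graph_def by blast+
  then obtain W where W: "walk E r W" "last (r # W) = r" "V - {r} \<subseteq> set W"
    using closed_walk_covering[OF _ r, where T="V - {r}"] by blast
  have "x ` V \<subseteq> x ` set W"
  proof
    fix a assume "a \<in> x ` V"
    then obtain t where "t \<in> V - {r}" "x t = a" using label_avoids_vertex[OF G] by blast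
    then show "a \<in> x ` set W" using W(3) by blast
  qed
  with W show ?thesis by blast
qed

(* Some node of dec(G) is reachable from every node: (r, S), where S is the result of
   executing a synchronizing walk at r; from (u, X) walk to r, then execute that walk. *)
lemma dec_universal_target:
  assumes G: "event_graph V E ins x U"
  shows "\<exists>c\<in>dec_nodes V x. \<forall>w\<in>dec_nodes V x. (w, c) \<in> (dec_edges V E ins x)\<^sup>*"
proof -
  have EV: "\<forall>e\<in>E. e \<subseteq> V" and conn: "\<forall>u\<in>V. \<forall>v\<in>V. (u, v) \<in> (graph_rel E)\<^sup>*"
    and "V \<noteq> {}" using G unfolding event_graph_def by blast+
  then obtain r where r: "r \<in> V" by blast
  obtain W where W: "walk E r W" "last (r # W) = r" "x ` V \<subseteq> x ` set W"
    using synchronizing_walk[OF G r] by blast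
  have WV: "set W \<subseteq> V" using walk_vertices[OF EV W(1)] .
  define S where "S = run ins x {} W"
  have target: "(r, S) \<in> dec_nodes V x"
    using r run_subset[OF WV, of "{}"] by (simp add: S_def dec_nodes_def)
  have "(w, (r, S)) \<in> (dec_edges V E ins x)\<^sup>*" if wN: "w \<in> dec_nodes V x" for w
  proof -
    obtain u X where w: "w = (u, X)" and u: "u \<in> V" and X: "X \<subseteq> x ` V"
      using wN by (auto simp: dec_nodes_def)
    obtain ws where ws: "walk E u ws" "last (u # ws) = r" using walk_of_reach conn r u by meson
    let ?Y = "run ins x X ws"
    have Y: "?Y \<subseteq> x ` V" using run_subset[OF walk_vertices[OF EV ws(1)] X] .
    have "((u, X), (r, ?Y)) \<in> (dec_edges V E ins x)\<^sup>*"
      using dec_path_of_walk[OF EV ws(1) u X] ws(2) by simp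
    moreover have "((r, ?Y), (r, S)) \<in> (dec_edges V E ins x)\<^sup>*"
      using dec_path_of_walk[OF EV W(1) r Y] W(2) run_reset[OF WV W(3) Y, of "{}"]
      by (simp add: S_def)
    ultimately show ?thesis unfolding w by (rule rtrancl_trans)
  qed
  with target show ?thesis by blast
qed

theorem mainTheorem4:
  fixes V :: "'v set" and E :: "'v set set" and ins :: "'v \<Rightarrow> bool"
    and x :: "'v \<Rightarrow> 'u" and U :: "'u set"
  assumes "event_graph V E ins x U"
  shows "\<exists>C. sink_component (dec_nodes V x) (dec_edges V E ins x) C
           \<and> (\<forall>C'. sink_component (dec_nodes V x) (dec_edges V E ins x) C' \<longrightarrow> C' = C)
           \<and> (\<forall>w\<in>dec_nodes V x. \<exists>c\<in>C. (w, c) \<in> (dec_edges V E ins x)\<^sup>*)"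
proof -
  obtain c where c: "c \<in> dec_nodes V x"
    and reach: "\<forall>w\<in>dec_nodes V x. (w, c) \<in> (dec_edges V E ins x)\<^sup>*"
    using dec_universal_target[OF assms] by blast
  have edges: "dec_edges V E ins x \<subseteq> dec_nodes V x \<times> dec_nodes V x"
    unfolding dec_edges_def by auto
  show ?thesis by (rule unique_sink_component[OF edges c reach])
qed

end
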